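(* Let $m\ge3$, $p\in[m]$, and let $\lambda_1,\lambda_2$ be $\mathbb{Z}_2$-characteristic maps over $P_m$. Then the D-J classes of $\lambda_1$ and $\lambda_2$ are $p$-adjacent if and only if $\operatorname{supp}_{\lambda_1}p=\operatorname{supp}_{\lambda_2}p$.
   Context: $P_m$ is the simplicial complex on $[m]$ with facets $\{i,i+1\}$ (mod $m$). For a pure $(n-1)$-dimensional simplicial complex $K$ on a vertex set $V$, a $\mathbb{Z}_2$-characteristic map over $K$ is a map $\lambda\colon V\to\mathbb{Z}_2^n$ such that the images of the vertices of every face are linearly independent; $\lambda,\lambda'$ are D-J equivalent if $\lambda'=\phi\circ\lambda$ with $\phi\in GL(n,\mathbb{Z}_2)$. For a face $\sigma$ of $K$, the projection $\operatorname{proj}_\sigma\lambda$ is the characteristic map over the link $\operatorname{lk}_K\sigma$ given by $w\mapsto[\lambda(w)]\in\mathbb{Z}_2^n/\langle\lambda(v):v\in\sigma\rangle\cong\mathbb{Z}_2^{n-|\sigma|}$ (well defined up to D-J equivalence). The wedge $\mathrm{wed}_pK$ is the simplicial complex on $(V\setminus\{p\})\cup\{p_1,p_2\}$ whose minimal non-faces are the minimal non-faces of $K$ not containing $p$, together with $(\tau\setminus\{p\})\cup\{p_1,p_2\}$ for each minimal non-face $\tau\ni p$ of $K$. The link of $p_2$ (resp. $p_1$) in $\mathrm{wed}_pK$ is identified with $K$ via $p_1\mapsto p$ (resp. $p_2\mapsto p$) and identity on other vertices. Two D-J classes $\lambda_1,\lambda_2$ over $K$ are $p$-adjacent if there is a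 $\mathbb{Z}_2$-characteristic map $\Lambda$ over $\mathrm{wed}_pK$ with $\operatorname{proj}_{p_2}\Lambda\simeq\lambda_1$ and $\operatorname{proj}_{p_1}\Lambda\simeq\lambda_2$ (D-J equivalent); $\lambda_1=\lambda_2$ is allowed. For a characteristic map $\lambda$ over $P_m$, $\operatorname{supp}_\lambda p=\lambda^{-1}(\lambda(p))$, which depends only on the D-J class. *)

theory Defs
  imports Main
begin

text \<open>A vector of Z_2^n is a function nat => bool vanishing outside {0..<n};
addition is pointwise exclusive or.\<close>

type_synonym z2vec = "nat \<Rightarrow> bool"

definition vec :: "nat \<Rightarrow> z2vec set" where
  "vec n = {x. \<forall>i\<ge>n. \<not> x i}"

definition vzero :: z2vec where
  "vzero = (\<lambda>_. False)"

definition vadd :: "z2vec \<Rightarrow> z2vec \<Rightarrow> z2vec" where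
  "vadd x y = (\<lambda>i. x i \<noteq> y i)"

definition vsum :: "('a \<Rightarrow> z2vec) \<Rightarrow> 'a set \<Rightarrow> z2vec" where
  "vsum f T = (\<lambda>i. odd (card {v\<in>T. f v i}))"

definition lin_indep :: "('a \<Rightarrow> z2vec) \<Rightarrow> 'a set \<Rightarrow> bool" where
  "lin_indep f S \<longleftrightarrow> finite S \<and> inj_on f S \<and>
     (\<forall>T\<subseteq>S. T \<noteq> {} \<longrightarrow> vsum f T \<noteq> vzero)"

definition vspan :: "('a \<Rightarrow> z2vec) \<Rightarrow> 'a set \<Rightarrow> z2vec set" where
  "vspan f S = {vsum f T | T. T \<subseteq> S}"

definition linear_z2 :: "nat \<Rightarrow> nat \<Rightarrow> (z2vec \<Rightarrow> z2vec) \<Rightarrow> bool" where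
  "linear_z2 n k \<phi> \<longleftrightarrow> (\<forall>x\<in>vec n. \<phi> x \<in> vec k) \<and>
     (\<forall>x\<in>vec n. \<forall>y\<in>vec n. \<phi> (vadd x y) = vadd (\<phi> x) (\<phi> y))"

definition GL_z2 :: "nat \<Rightarrow> (z2vec \<Rightarrow> z2vec) \<Rightarrow> bool" where
  "GL_z2 n \<phi> \<longleftrightarrow> linear_z2 n n \<phi> \<and> bij_betw \<phi> (vec n) (vec n)"

text \<open>A simplicial complex is given by its set of faces K on a vertex set V.\<close>

definition char_map :: "'a set set \<Rightarrow> 'a set \<Rightarrow> nat \<Rightarrow> ('a \<Rightarrow> z2vec) \<Rightarrow> bool" where
  "char_map K V n lam \<longleftrightarrow> (\<forall>v\<in>V. lam v \<in> vec n) \<and> (\<forall>\<sigma>\<in>K. lin_indep lam \<sigma>)"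

definition DJ_equiv :: "'a set \<Rightarrow> nat \<Rightarrow> ('a \<Rightarrow> z2vec) \<Rightarrow> ('a \<Rightarrow> z2vec) \<Rightarrow> bool" where
  "DJ_equiv V n lam lam' \<longleftrightarrow> (\<exists>\<phi>. GL_z2 n \<phi> \<and> (\<forall>v\<in>V. lam' v = \<phi> (lam v)))"

definition link :: "'a set set \<Rightarrow> 'a set \<Rightarrow> 'a set set" where
  "link K \<sigma> = {\<tau>\<in>K. \<tau> \<inter> \<sigma> = {} \<and> \<tau> \<union> \<sigma> \<in> K}"

definition link_verts :: "'a set set \<Rightarrow> 'a set \<Rightarrow> 'a set" where
  "link_verts K \<sigma> = {w. {w} \<in> link K \<sigma>}"

text \<open>mu is a projection of Lambda (char. map of dimension n) at the face sigma:
  mu = psi o Lambda on the link, where psi : Z_2^n -> Z_2^(n-|sigma|) is a linear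
  surjection with kernel span(Lambda(sigma)), i.e. psi realizes an isomorphism
  Z_2^n / <Lambda(v) : v in sigma> = Z_2^(n-|sigma|).\<close>
definition is_proj :: "'a set set \<Rightarrow> nat \<Rightarrow> ('a \<Rightarrow> z2vec) \<Rightarrow> 'a set \<Rightarrow> ('a \<Rightarrow> z2vec) \<Rightarrow> bool" where
  "is_proj K n \<Lambda> \<sigma> \<mu> \<longleftrightarrow> (\<exists>\<psi>. linear_z2 n (n - card \<sigma>) \<psi> \<and>
      \<psi> ` vec n = vec (n - card \<sigma>) \<and>
      {x\<in>vec n. \<psi> x = vzero} = vspan \<Lambda> \<sigma> \<and>
      (\<forall>w\<in>link_verts K \<sigma>. \<mu> w = \<psi> (\<Lambda> w)))"

definition proj_DJ :: "'a set set \<Rightarrow> nat \<Rightarrow> ('a \<Rightarrow> z2vec) \<Rightarrow> 'a set \<Rightarrow> ('a \<Rightarrow> z2vec) \<Rightarrow> bool" where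
  "proj_DJ K n \<Lambda> \<sigma> lam' \<longleftrightarrow> (\<exists>\<mu>. is_proj K n \<Lambda> \<sigma> \<mu> \<and>
      DJ_equiv (link_verts K \<sigma>) (n - card \<sigma>) \<mu> lam')"

definition min_nonfaces :: "'a set set \<Rightarrow> 'a set \<Rightarrow> 'a set set" where
  "min_nonfaces K V = {\<tau>. \<tau> \<subseteq> V \<and> \<tau> \<notin> K \<and> (\<forall>\<rho>. \<rho> \<subset> \<tau> \<longrightarrow> \<rho> \<in> K)}"

text \<open>Vertices of wed_p K: Inl v for v in V - {p}, p1 = Inr False, p2 = Inr True.\<close>
abbreviation p1 :: "'a + bool" where "p1 \<equiv> Inr False"
abbreviation p2 :: "'a + bool" where "p2 \<equiv> Inr True"

definition wed_verts :: "'a set \<Rightarrow> 'a \<Rightarrow> ('a + bool) set" where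
  "wed_verts V p = Inl ` (V - {p}) \<union> {p1, p2}"

definition wed_min_nonfaces :: "'a set set \<Rightarrow> 'a set \<Rightarrow> 'a \<Rightarrow> ('a + bool) set set" where
  "wed_min_nonfaces K V p =
     {Inl ` \<tau> | \<tau>. \<tau> \<in> min_nonfaces K V \<and> p \<notin> \<tau>} \<union>
     {Inl ` (\<tau> - {p}) \<union> {p1, p2} | \<tau>. \<tau> \<in> min_nonfaces K V \<and> p \<in> \<tau>}"

definition wed :: "'a set set \<Rightarrow> 'a set \<Rightarrow> 'a \<Rightarrow> ('a + bool) set set" where
  "wed K V p = {\<sigma>. \<sigma> \<subseteq> wed_verts V p \<and> (\<forall>\<tau>\<in>wed_min_nonfaces K V p. \<not> \<tau> \<subseteq> \<sigma>)}"

text \<open>Identification of lk p2 with K (p1 -> p) and of lk p1 with K (p2 -> p).\<close>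
definition ident2 :: "'a \<Rightarrow> 'a + bool \<Rightarrow> 'a" where
  "ident2 p w = (case w of Inl v \<Rightarrow> v | Inr _ \<Rightarrow> p)"

definition ident1 :: "'a \<Rightarrow> 'a + bool \<Rightarrow> 'a" where
  "ident1 p w = (case w of Inl v \<Rightarrow> v | Inr _ \<Rightarrow> p)"

definition p_adjacent :: "'a set set \<Rightarrow> 'a set \<Rightarrow> nat \<Rightarrow> 'a \<Rightarrow> ('a \<Rightarrow> z2vec) \<Rightarrow> ('a \<Rightarrow> z2vec) \<Rightarrow> bool" where
  "p_adjacent K V n p lam1 lam2 \<longleftrightarrow> (\<exists>\<Lambda>. char_map (wed K V p) (wed_verts V p) (n + 1) \<Lambda> \<and>
      proj_DJ (wed K V p) (n + 1) \<Lambda> {p2} (lam1 \<circ> ident2 p) \<and>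
      proj_DJ (wed K V p) (n + 1) \<Lambda> {p1} (lam2 \<circ> ident1 p))"

definition polygon :: "nat \<Rightarrow> nat set set" where
  "polygon m = {\<sigma>. \<sigma> \<subseteq> {1..m} \<and> card \<sigma> \<le> 1} \<union> {{i, i mod m + 1} | i. i \<in> {1..m}}"

definition supp :: "'a set \<Rightarrow> ('a \<Rightarrow> z2vec) \<Rightarrow> 'a \<Rightarrow> 'a set" where
  "supp V lam p = {v\<in>V. lam v = lam p}"

end

theory Submission
  imports Defs
begin

text \<open>
  Let \<Lambda> be a characteristic map over wed_p K of dimension n + 1.  Its projections at the
  apexes p2 and p1 are the quotients by \<Lambda>(p2) resp. \<Lambda>(p1).  For a vertex v \<noteq> p of K,
  \<lambda>1(v) = \<lambda>1(p) thus means \<Lambda>(v) + \<Lambda>(p1) \<in> {0, \<Lambda>(p2)}; since {v, p1} is a face this is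
  \<Lambda>(v) + \<Lambda>(p1) + \<Lambda>(p2) = 0, a condition symmetric in p1 and p2.  Hence p-adjacent maps have
  the same support of p.

  Conversely, let \<phi> \<in> GL(n) with \<phi>(\<lambda>1(p)) = \<lambda>2(p) and \<lambda>2(v) \<in> {\<phi>(\<lambda>1(v)), \<phi>(\<lambda>1(v) + \<lambda>1(p))}
  for all v.  Then \<Lambda>(v) = (\<lambda>1(v), t_v), with t_v recording which of the two cases occurs,
  \<Lambda>(p2) = e_(n+1) and \<Lambda>(p1) = (\<lambda>1(p), 1) is a characteristic map over the wedge whose two
  projections are \<lambda>1 and \<lambda>2.  In Z_2^2 such a \<phi> exists as soon as the supports agree: the
  nonzero vectors other than \<lambda>2(p) are \<phi>(\<lambda>1(v)) and \<phi>(\<lambda>1(v)) + \<lambda>2(p) whenever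
  \<lambda>1(v) \<noteq> \<lambda>1(p).  The argument only uses that P_m has all vertices and no minimal non-face of
  size less than 2.
\<close>

lemma vzero_apply: "\<not> vzero i"
  by (simp add: vzero_def)

lemma vadd_self [simp]: "vadd x x = vzero"
  by (simp add: vadd_def vzero_def)

lemma vadd_vzero [simp]: "vadd x vzero = x" "vadd vzero x = x"
  by (simp_all add: vadd_def vzero_def)

lemma vadd_eq_vzero_iff: "vadd x y = vzero \<longleftrightarrow> x = y"
  by (auto simp: vadd_def vzero_def fun_eq_iff)

lemma vadd_eq_swap: "vadd x a = b \<longleftrightarrow> vadd x b = a"
  by (auto simp: vadd_def fun_eq_iff)

lemma vadd_in_vec: "x \<in> vec n \<Longrightarrow> y \<in> vec n \<Longrightarrow> vadd x y \<in> vec n"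
  by (simp add: vec_def vadd_def)

lemma vzero_in_vec [simp]: "vzero \<in> vec n"
  by (simp add: vec_def vzero_def)

lemma vec_mono: "x \<in> vec n \<Longrightarrow> n \<le> k \<Longrightarrow> x \<in> vec k"
  by (simp add: vec_def)

lemma vec_fun_upd_False: "x \<in> vec n \<Longrightarrow> x(n := False) = x"
  by (rule fun_upd_idem) (simp add: vec_def)

lemma linear_z2_vzero: "linear_z2 n k \<psi> \<Longrightarrow> \<psi> vzero = vzero"
  using vadd_self[of "\<psi> vzero"] by (auto simp: linear_z2_def dest!: bspec[of _ _ vzero])

lemma vsum_empty [simp]: "vsum f {} = vzero"
  by (simp add: vsum_def vzero_def)

lemma vsum_singleton [simp]: "vsum f {x} = f x"
proof
  fix i
  have "{v\<in>{x}. f v i} = (if f x i then {x} else {})" by auto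
  then show "vsum f {x} i = f x i" by (simp add: vsum_def)
qed

lemma vsum_insert:
  assumes "finite T" "x \<notin> T"
  shows "vsum f (insert x T) = vadd (f x) (vsum f T)"
proof
  fix i
  have "{v\<in>insert x T. f v i} = (if f x i then insert x {v\<in>T. f v i} else {v\<in>T. f v i})" by auto
  then show "vsum f (insert x T) i = vadd (f x) (vsum f T) i"
    using assms by (simp add: vsum_def vadd_def)
qed

lemma vsum_in_vec: "(\<And>x. x \<in> T \<Longrightarrow> f x \<in> vec n) \<Longrightarrow> vsum f T \<in> vec n"
proof -
  assume "\<And>x. x \<in> T \<Longrightarrow> f x \<in> vec n"
  then have "\<And>i. i \<ge> n \<Longrightarrow> {v\<in>T. f v i} = {}" by (auto simp: vec_def)
  then show ?thesis by (simp add: vec_def vsum_def del: Collect_empty_eq)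
qed

lemma vsum_cong: "(\<And>x. x \<in> T \<Longrightarrow> f x = g x) \<Longrightarrow> vsum f T = vsum g T"
  unfolding vsum_def by (metis (mono_tags, lifting) Collect_cong)

lemma vsum_remove_vzero: "f q = vzero \<Longrightarrow> vsum f (T - {q}) = vsum f T"
proof -
  assume "f q = vzero"
  then have "\<And>i. {v\<in>T - {q}. f v i} = {v\<in>T. f v i}" by (auto simp: vzero_def)
  then show ?thesis by (simp add: vsum_def)
qed

lemma vsum_reindex: "inj_on g T \<Longrightarrow> vsum f (g ` T) = vsum (f \<circ> g) T"
proof -
  assume inj: "inj_on g T"
  have "\<And>i. {u\<in>g ` T. f u i} = g ` {v\<in>T. f (g v) i}" by auto
  moreover have "\<And>i. card (g ` {v\<in>T. f (g v) i}) = card {v\<in>T. f (g v) i}"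
    using inj by (auto intro: card_image inj_on_subset)
  ultimately show ?thesis by (simp add: vsum_def)
qed

lemma linear_z2_vsum:
  assumes lin: "linear_z2 n k \<psi>" and "finite T" and "\<And>x. x \<in> T \<Longrightarrow> f x \<in> vec n"
  shows "\<psi> (vsum f T) = vsum (\<psi> \<circ> f) T"
  using assms(2,3)
proof (induction T rule: finite_induct)
  case empty
  show ?case using linear_z2_vzero[OF lin] by simp
next
  case (insert x T)
  have "vsum f T \<in> vec n" "f x \<in> vec n" using insert.prems by (auto intro: vsum_in_vec)
  then show ?case
    using insert lin by (simp add: vsum_insert linear_z2_def)
qed

lemma vspan_singleton: "vspan f {q} = {vzero, f q}"
  unfolding vspan_def subset_singleton_iff
  by (auto intro: exI[of _ "{}"] exI[of _ "{q}"])

lemma lin_indep_subset: "lin_indep f S \<Longrightarrow> T \<subseteq> S \<Longrightarrow> lin_indep f T"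
  unfolding lin_indep_def by (meson finite_subset inj_on_subset order_trans)

lemma lin_indep_cong: "lin_indep f S \<Longrightarrow> (\<And>x. x \<in> S \<Longrightarrow> f x = g x) \<Longrightarrow> lin_indep g S"
  unfolding lin_indep_def by (metis inj_on_cong subsetD vsum_cong)

lemma lin_indep_reindex:
  assumes "lin_indep f (g ` S)" "inj_on g S"
  shows "lin_indep (f \<circ> g) S"
  unfolding lin_indep_def
proof (intro conjI allI impI)
  show "finite S" "inj_on (f \<circ> g) S"
    using assms by (auto simp: lin_indep_def finite_image_iff comp_inj_on)
  fix T assume "T \<subseteq> S" "T \<noteq> {}"
  then show "vsum (f \<circ> g) T \<noteq> vzero"
    using assms vsum_reindex[of g T f] inj_on_subset[of g S T]
    unfolding lin_indep_def by (metis image_is_empty image_mono)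
qed

lemma lin_indep_if_comp_linear:
  assumes lin: "linear_z2 n k \<phi>" and vec: "\<And>x. x \<in> S \<Longrightarrow> f x \<in> vec n"
    and indep: "lin_indep (\<phi> \<circ> f) S"
  shows "lin_indep f S"
  unfolding lin_indep_def
proof (intro conjI allI impI)
  show "finite S" "inj_on f S"
    using indep by (auto simp: lin_indep_def inj_on_def)
  fix T assume T: "T \<subseteq> S" "T \<noteq> {}"
  then have "\<phi> (vsum f T) = vsum (\<phi> \<circ> f) T"
    using indep vec by (intro linear_z2_vsum[OF lin]) (auto simp: lin_indep_def intro: finite_subset)
  moreover have "vsum (\<phi> \<circ> f) T \<noteq> vzero" using indep T by (auto simp: lin_indep_def)
  ultimately show "vsum f T \<noteq> vzero" using linear_z2_vzero[OF lin] by auto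
qed

lemma lin_indep_iff_vsum:
  "lin_indep f S \<longleftrightarrow> finite S \<and> (\<forall>T\<subseteq>S. T \<noteq> {} \<longrightarrow> vsum f T \<noteq> vzero)"
proof -
  have "inj_on f S" if "\<forall>T\<subseteq>S. T \<noteq> {} \<longrightarrow> vsum f T \<noteq> vzero"
  proof (rule inj_onI, rule ccontr)
    fix x y assume "x \<in> S" "y \<in> S" "f x = f y" "x \<noteq> y"
    then show False
      using that[rule_format, of "{x, y}"] by (simp add: vsum_insert)
  qed
  then show ?thesis by (auto simp: lin_indep_def)
qed

lemma lin_indep_kernel_extension:
  assumes lin: "linear_z2 n k \<psi>" and vec: "\<And>x. x \<in> S \<Longrightarrow> f x \<in> vec n"
    and "finite S" and q: "\<psi> (f q) = vzero" "f q \<noteq> vzero"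
    and indep: "lin_indep (\<psi> \<circ> f) (S - {q})"
  shows "lin_indep f S"
  unfolding lin_indep_iff_vsum
proof (intro conjI allI impI notI)
  show "finite S" by fact
  fix T assume T: "T \<subseteq> S" "T \<noteq> {}" and sum: "vsum f T = vzero"
  have "finite T" using T(1) \<open>finite S\<close> by (rule finite_subset)
  then have "\<psi> (vsum f T) = vsum (\<psi> \<circ> f) T"
    using T vec by (intro linear_z2_vsum[OF lin]) auto
  also have "\<dots> = vsum (\<psi> \<circ> f) (T - {q})"
    using q by (intro vsum_remove_vzero[symmetric]) simp
  finally have "vsum (\<psi> \<circ> f) (T - {q}) = vzero"
    using sum linear_z2_vzero[OF lin] by simp
  moreover have "T - {q} \<subseteq> S - {q}" using T(1) by blast
  ultimately have "T - {q} = {}"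
    using indep unfolding lin_indep_iff_vsum by blast
  then have "T = {q}" using T(2) by blast
  then show False using sum q by simp
qed

lemma char_map_vertex:
  assumes "char_map K V n lam" "v \<in> V" "{v} \<in> K"
  shows "lam v \<in> vec n" "lam v \<noteq> vzero"
proof -
  show "lam v \<in> vec n" using assms by (simp add: char_map_def)
  have "lin_indep lam {v}" using assms by (simp add: char_map_def)
  then show "lam v \<noteq> vzero" unfolding lin_indep_def by (metis insert_not_empty subset_refl vsum_singleton)
qed

lemma GL_z2_linear: "GL_z2 n \<phi> \<Longrightarrow> linear_z2 n n \<phi>"
  by (simp add: GL_z2_def)

lemma GL_z2_inj: "GL_z2 n \<phi> \<Longrightarrow> x \<in> vec n \<Longrightarrow> y \<in> vec n \<Longrightarrow> \<phi> x = \<phi> y \<longleftrightarrow> x = y"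
  by (auto simp: GL_z2_def bij_betw_def dest: inj_onD)

lemma GL_z2_id: "GL_z2 n id"
  by (simp add: GL_z2_def linear_z2_def)

lemma vec2_eq_iff:
  assumes "x \<in> vec 2" "y \<in> vec 2"
  shows "x = y \<longleftrightarrow> x 0 = y 0 \<and> x 1 = y 1"
proof
  assume low: "x 0 = y 0 \<and> x 1 = y 1"
  have high: "x i = y i" if "i \<ge> 2" for i using assms that by (simp add: vec_def)
  show "x = y"
  proof
    fix i :: nat
    consider "i = 0" | "i = 1" | "i \<ge> 2" by linarith
    then show "x i = y i" using low high by cases auto
  qed
qed simp

lemma vec2_eq_vzero_iff: "x \<in> vec 2 \<Longrightarrow> x = vzero \<longleftrightarrow> \<not> x 0 \<and> \<not> x 1"
  using vec2_eq_iff[OF _ vzero_in_vec, of x] by (simp add: vzero_def)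

lemma vec2_nonzero_cases:
  assumes "a \<in> vec 2" "x \<in> vec 2" "y \<in> vec 2"
    and "a \<noteq> vzero" "x \<noteq> vzero" "y \<noteq> vzero" "x \<noteq> a" "y \<noteq> a"
  shows "y = x \<or> y = vadd x a"
proof -
  have "vadd x a \<in> vec 2" using assms by (simp add: vadd_in_vec)
  then show ?thesis
    using assms by (simp add: vec2_eq_iff vec2_eq_vzero_iff) (auto simp: vadd_def vzero_def)
qed

definition mat2 :: "bool \<Rightarrow> bool \<Rightarrow> bool \<Rightarrow> bool \<Rightarrow> z2vec \<Rightarrow> z2vec" where
  "mat2 a b c d x = (\<lambda>i. if i = 0 then (a \<and> x 0) \<noteq> (b \<and> x 1)
                        else if i = 1 then (c \<and> x 0) \<noteq> (d \<and> x 1) else False)"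

lemma mat2_in_vec: "mat2 a b c d x \<in> vec 2"
  by (simp add: mat2_def vec_def)

lemma mat2_vadd: "mat2 a b c d (vadd x y) = vadd (mat2 a b c d x) (mat2 a b c d y)"
  by (auto simp: mat2_def vadd_def)

text \<open>Over Z_2 the adjugate of an invertible 2x2 matrix is its inverse.\<close>
lemma mat2_adjugate:
  assumes "(a \<and> d) \<noteq> (b \<and> c)" "y \<in> vec 2"
  shows "mat2 a b c d (mat2 d b c a y) = y"
  using assms mat2_in_vec by (simp add: vec2_eq_iff) (auto simp: mat2_def)

lemma GL_z2_mat2:
  assumes det: "(a \<and> d) \<noteq> (b \<and> c)"
  shows "GL_z2 2 (mat2 a b c d)"
proof -
  have "mat2 d b c a (mat2 a b c d x) = x" if "x \<in> vec 2" for x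
    using mat2_adjugate[of d a b c x] det that by (simp add: conj_commute)
  then have "inj_on (mat2 a b c d) (vec 2)"
    by (rule inj_on_inverseI[where g = "mat2 d b c a"])
  moreover have "mat2 a b c d ` vec 2 = vec 2"
  proof
    show "vec 2 \<subseteq> mat2 a b c d ` vec 2"
    proof
      fix y assume "y \<in> vec 2"
      then have "y = mat2 a b c d (mat2 d b c a y)" using mat2_adjugate[OF det] by simp
      then show "y \<in> mat2 a b c d ` vec 2" using mat2_in_vec by blast
    qed
  qed (use mat2_in_vec in blast)
  moreover have "linear_z2 2 2 (mat2 a b c d)"
    by (simp add: linear_z2_def mat2_in_vec mat2_vadd)
  ultimately show ?thesis by (simp add: GL_z2_def bij_betw_def)
qed

lemma GL_z2_2_transitive:
  assumes "x \<in> vec 2" "y \<in> vec 2" "x \<noteq> vzero" "y \<noteq> vzero"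
  shows "\<exists>\<phi>. GL_z2 2 \<phi> \<and> \<phi> x = y"
proof -
  have nz: "x 0 \<or> x 1" "y 0 \<or> y 1" using assms vec2_eq_vzero_iff by blast+
  define a where "a = ((y 0 \<and> x 0) \<noteq> (\<not> y 0 \<and> x 1))"
  define b where "b = ((y 0 \<and> \<not> x 0) \<noteq> (\<not> y 0 \<and> x 0))"
  define c where "c = ((y 1 \<and> x 0) \<noteq> (y 0 \<and> x 1))"
  define d where "d = ((y 1 \<and> \<not> x 0) \<noteq> (y 0 \<and> x 0))"
  have det: "(a \<and> d) \<noteq> (b \<and> c)" using nz unfolding a_def b_def c_def d_def by auto
  have "mat2 a b c d x = y" using nz assms mat2_in_vec
    by (simp add: vec2_eq_iff) (auto simp: mat2_def a_def b_def c_def d_def)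
  then show ?thesis using GL_z2_mat2[OF det] by blast
qed

text \<open>For A in Z_2^(n+1) with last coordinate 1 this is the linear surjection
  Z_2^(n+1) \<rightarrow> Z_2^n with kernel {0, A}.\<close>
definition proj_along :: "nat \<Rightarrow> z2vec \<Rightarrow> z2vec \<Rightarrow> z2vec" where
  "proj_along n A x = (if x n then vadd x A else x)"

lemma proj_along_vadd:
  "proj_along n A (vadd x y) = vadd (proj_along n A x) (proj_along n A y)"
  by (auto simp: proj_along_def vadd_def)

lemma proj_along_in_vec:
  assumes "A \<in> vec (Suc n)" "A n" "x \<in> vec (Suc n)"
  shows "proj_along n A x \<in> vec n"
proof -
  have "\<not> x i \<and> \<not> A i" if "i > n" for i
    using assms that by (simp add: vec_def Suc_le_eq)
  then show ?thesis
    using assms(2) by (auto simp: proj_along_def vec_def vadd_def le_less)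
qed

lemma proj_along_fixes: "x \<in> vec n \<Longrightarrow> proj_along n A x = x"
  by (simp add: proj_along_def vec_def)

lemma proj_along_self: "A n \<Longrightarrow> proj_along n A A = vzero"
  by (simp add: proj_along_def)

lemma proj_along_fun_upd:
  assumes "x \<in> vec n" "A n"
  shows "proj_along n A (x(n := b)) = (if b then vadd x (A(n := False)) else x)"
  using assms vec_fun_upd_False[OF assms(1)] by (cases b) (auto simp: proj_along_def vadd_def vec_def)

lemma proj_along_image:
  assumes "A \<in> vec (Suc n)" "A n"
  shows "proj_along n A ` vec (Suc n) = vec n"
proof
  show "proj_along n A ` vec (Suc n) \<subseteq> vec n"
    using proj_along_in_vec[OF assms] by blast
  show "vec n \<subseteq> proj_along n A ` vec (Suc n)"
    using proj_along_fixes vec_mono[of _ n "Suc n"] by (metis image_eqI le_SucI order_refl subsetI)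
qed

lemma proj_along_kernel:
  assumes "A \<in> vec (Suc n)" "A n"
  shows "{x \<in> vec (Suc n). proj_along n A x = vzero} = {vzero, A}"
  using assms by (auto simp: proj_along_def vadd_eq_vzero_iff vzero_apply)

lemma linear_z2_proj_along:
  assumes "A \<in> vec (Suc n)" "A n"
  shows "linear_z2 (Suc n) n (proj_along n A)"
  using assms by (simp add: linear_z2_def proj_along_in_vec proj_along_vadd)

lemma proj_DJ_proj_along:
  assumes A: "\<Lambda> q \<in> vec (Suc n)" "\<Lambda> q n" and "GL_z2 n \<phi>"
    and "\<And>w. w \<in> link_verts K {q} \<Longrightarrow> lam w = \<phi> (proj_along n (\<Lambda> q) (\<Lambda> w))"
  shows "proj_DJ K (Suc n) \<Lambda> {q} lam"
  unfolding proj_DJ_def is_proj_def DJ_equiv_def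
proof (intro exI conjI ballI)
  show "linear_z2 (Suc n) (Suc n - card {q}) (proj_along n (\<Lambda> q))"
    using linear_z2_proj_along[OF A] by simp
  show "proj_along n (\<Lambda> q) ` vec (Suc n) = vec (Suc n - card {q})"
    using proj_along_image[OF A] by simp
  show "{x \<in> vec (Suc n). proj_along n (\<Lambda> q) x = vzero} = vspan \<Lambda> {q}"
    using proj_along_kernel[OF A] by (simp add: vspan_singleton)
  show "GL_z2 (Suc n - card {q}) \<phi>" using assms(3) by simp
qed (use assms(4) in auto)

lemma ident2_simps [simp]: "ident2 p (Inl v) = v" "ident2 p (Inr c) = p"
  by (simp_all add: ident2_def)

lemma ident1_eq_ident2: "ident1 = ident2"
  unfolding ident1_def ident2_def ..

lemma Inr_in_wed_verts: "Inr c \<in> wed_verts V p"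
  by (cases c) (simp_all add: wed_verts_def)

lemma Inl_in_wed_verts: "Inl v \<in> wed_verts V p \<longleftrightarrow> v \<in> V \<and> v \<noteq> p"
  by (auto simp: wed_verts_def)

lemma inj_on_ident2: "inj_on (ident2 p) (wed_verts V p - {Inr c})"
  by (rule inj_onI) (auto simp: wed_verts_def)

lemma wed_min_nonfaces_cases:
  assumes "t \<in> wed_min_nonfaces K V p"
  obtains (base) \<tau> where "\<tau> \<in> min_nonfaces K V" "t = Inl ` \<tau>"
    | (apex) \<tau> where "\<tau> \<in> min_nonfaces K V" "t = Inl ` (\<tau> - {p}) \<union> {p1, p2}"
  using assms unfolding wed_min_nonfaces_def by blast

lemma wedI:
  "\<sigma> \<subseteq> wed_verts V p \<Longrightarrow> (\<And>t. t \<in> wed_min_nonfaces K V p \<Longrightarrow> \<not> t \<subseteq> \<sigma>) \<Longrightarrow> \<sigma> \<in> wed K V p"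
  by (simp add: wed_def)

lemma wed_subset: "\<sigma> \<in> wed K V p \<Longrightarrow> \<sigma>' \<subseteq> \<sigma> \<Longrightarrow> \<sigma>' \<in> wed K V p"
  unfolding wed_def by blast

lemma wed_subset_verts: "\<sigma> \<in> wed K V p \<Longrightarrow> \<sigma> \<subseteq> wed_verts V p"
  unfolding wed_def by blast

lemma card_le_1_if_subset_singleton: "\<tau> \<subseteq> {v} \<Longrightarrow> card \<tau> \<le> 1"
  using card_mono[of "{v}" \<tau>] by simp

lemma wed_edge_Inl_Inr:
  assumes mnf: "\<forall>\<tau>\<in>min_nonfaces K V. 2 \<le> card \<tau>" and "v \<in> V" "v \<noteq> p"
  shows "{Inl v, Inr c} \<in> wed K V p"
proof (rule wedI)
  show "{Inl v, Inr c} \<subseteq> wed_verts V p" using assms by (auto simp: wed_verts_def)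
  fix t assume "t \<in> wed_min_nonfaces K V p"
  then show "\<not> t \<subseteq> {Inl v, Inr c}"
  proof (cases rule: wed_min_nonfaces_cases)
    case (base \<tau>)
    have "\<tau> \<subseteq> {v}" if "t \<subseteq> {Inl v, Inr c}" using that base(2) by blast
    then show ?thesis
      using mnf base(1) card_le_1_if_subset_singleton[of \<tau> v] by force
  qed auto
qed

lemma wed_edge_p1_p2:
  assumes mnf: "\<forall>\<tau>\<in>min_nonfaces K V. 2 \<le> card \<tau>"
  shows "{p1, p2} \<in> wed K V p"
proof (rule wedI)
  show "{p1, p2} \<subseteq> wed_verts V p" by (simp add: wed_verts_def)
  fix t assume "t \<in> wed_min_nonfaces K V p"
  then show "\<not> t \<subseteq> {p1, p2}"
  proof (cases rule: wed_min_nonfaces_cases)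
    case (base \<tau>)
    have "\<tau> = {}" if "t \<subseteq> {p1, p2}" using that base(2) by blast
    then show ?thesis using mnf base(1) by force
  next
    case (apex \<tau>)
    have "\<tau> \<subseteq> {p}" if "t \<subseteq> {p1, p2}" using that apex(2) by blast
    then show ?thesis using mnf apex(1) card_le_1_if_subset_singleton[of \<tau> p] by force
  qed
qed

lemma wed_insert_Inr:
  assumes \<sigma>: "\<sigma> \<in> wed K V p" and "Inr (\<not> c) \<notin> \<sigma>"
  shows "insert (Inr c) \<sigma> \<in> wed K V p"
proof (rule wedI)
  show "insert (Inr c) \<sigma> \<subseteq> wed_verts V p"
    using wed_subset_verts[OF \<sigma>] by (auto simp: wed_verts_def)
  fix t assume t: "t \<in> wed_min_nonfaces K V p"
  then show "\<not> t \<subseteq> insert (Inr c) \<sigma>"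
  proof (cases rule: wed_min_nonfaces_cases)
    case (base \<tau>)
    then show ?thesis using \<sigma> t unfolding wed_def by blast
  next
    case (apex \<tau>)
    then show ?thesis using assms(2) by (cases c) auto
  qed
qed

lemma link_verts_subset: "K \<subseteq> Pow X \<Longrightarrow> link_verts K \<sigma> \<subseteq> X - \<sigma>"
  by (auto simp: link_verts_def link_def)

lemma link_verts_wed_subset: "link_verts (wed K V p) \<sigma> \<subseteq> wed_verts V p - \<sigma>"
  by (rule link_verts_subset) (auto dest: wed_subset_verts)

lemma link_verts_wed_Inl:
  assumes "\<forall>\<tau>\<in>min_nonfaces K V. 2 \<le> card \<tau>" and "v \<in> V" "v \<noteq> p"
  shows "Inl v \<in> link_verts (wed K V p) {Inr c}"
  using wed_edge_Inl_Inr[OF assms, of c] wed_subset[of _ K V p "{Inl v}"]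
  by (auto simp: link_verts_def link_def insert_commute)

lemma link_verts_wed_Inr:
  assumes "\<forall>\<tau>\<in>min_nonfaces K V. 2 \<le> card \<tau>"
  shows "Inr (\<not> c) \<in> link_verts (wed K V p) {Inr c}"
proof -
  have "{Inr (\<not> c), Inr c} \<in> wed K V p"
    using wed_edge_p1_p2[OF assms, of p] by (cases c) (auto simp: insert_commute)
  then show ?thesis
    using wed_subset[of _ K V p "{Inr (\<not> c)}"] by (auto simp: link_verts_def link_def insert_commute)
qed

lemma exists_min_nonface_subset:
  "finite \<tau> \<Longrightarrow> \<tau> \<subseteq> V \<Longrightarrow> \<tau> \<notin> K \<Longrightarrow> \<exists>\<rho>\<subseteq>\<tau>. \<rho> \<in> min_nonfaces K V"
proof (induction \<tau> rule: finite_psubset_induct)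
  case (psubset A)
  show ?case
  proof (cases "\<forall>\<rho>. \<rho> \<subset> A \<longrightarrow> \<rho> \<in> K")
    case True
    then have "A \<in> min_nonfaces K V" using psubset.prems by (simp add: min_nonfaces_def)
    then show ?thesis by blast
  next
    case False
    then obtain B where B: "B \<subset> A" "B \<notin> K" by blast
    have "B \<subseteq> V" using B(1) psubset.prems(1) by blast
    then obtain \<rho> where "\<rho> \<subseteq> B" "\<rho> \<in> min_nonfaces K V"
      using psubset.IH[OF B(1) _ B(2)] by blast
    then show ?thesis using B(1) by blast
  qed
qed

lemma wed_face_image_ident2:
  assumes "finite V" "p \<in> V" and \<sigma>: "\<sigma> \<in> wed K V p" "Inr c \<in> \<sigma>"
  shows "ident2 p ` (\<sigma> - {Inr c}) \<in> K"
proof (rule ccontr)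
  define \<rho> where "\<rho> = ident2 p ` (\<sigma> - {Inr c})"
  have \<sigma>_verts: "\<sigma> \<subseteq> wed_verts V p" using \<sigma>(1) by (rule wed_subset_verts)
  then have "\<rho> \<subseteq> V" using \<open>p \<in> V\<close> by (auto simp: \<rho>_def wed_verts_def)
  moreover assume "ident2 p ` (\<sigma> - {Inr c}) \<notin> K"
  ultimately obtain \<tau> where \<tau>: "\<tau> \<subseteq> \<rho>" "\<tau> \<in> min_nonfaces K V"
    using exists_min_nonface_subset[of \<rho> V K] finite_subset[OF _ \<open>finite V\<close>] \<rho>_def by blast
  have Inl_in: "Inl ` (\<tau> - {p}) \<subseteq> \<sigma>"
  proof (rule image_subsetI)
    fix u assume "u \<in> \<tau> - {p}"
    then obtain w where "w \<in> \<sigma>" "u = ident2 p w" "u \<noteq> p" using \<tau>(1) by (auto simp: \<rho>_def)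
    then show "Inl u \<in> \<sigma>" using \<sigma>_verts by (auto simp: wed_verts_def)
  qed
  have no_min_nonface: "\<not> t \<subseteq> \<sigma>" if "t \<in> wed_min_nonfaces K V p" for t
    using \<sigma>(1) that by (simp add: wed_def)
  show False
  proof (cases "p \<in> \<tau>")
    case True
    then have "p \<in> ident2 p ` (\<sigma> - {Inr c})" using \<tau>(1) by (auto simp: \<rho>_def)
    then obtain w where "w \<in> \<sigma> - {Inr c}" "ident2 p w = p" by (metis imageE)
    then have "Inr (\<not> c) \<in> \<sigma>"
      using \<sigma>_verts by (cases c) (auto simp: wed_verts_def)
    then have "Inl ` (\<tau> - {p}) \<union> {p1, p2} \<subseteq> \<sigma>"
      using Inl_in \<sigma>(2) by (cases c) auto
    moreover have "Inl ` (\<tau> - {p}) \<union> {p1, p2} \<in> wed_min_nonfaces K V p"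
      using \<tau>(2) True unfolding wed_min_nonfaces_def by blast
    ultimately show False using no_min_nonface by blast
  next
    case False
    then have "Inl ` \<tau> \<subseteq> \<sigma>" using Inl_in by simp
    moreover have "Inl ` \<tau> \<in> wed_min_nonfaces K V p"
      using \<tau>(2) False unfolding wed_min_nonfaces_def by blast
    ultimately show False using no_min_nonface by blast
  qed
qed

lemma lin_indep_wed_face:
  assumes V: "finite V" "p \<in> V" and \<sigma>: "\<sigma> \<in> wed K V p" "Inr c \<in> \<sigma>"
    and lam: "char_map K V n lam" and \<phi>: "linear_z2 n n \<phi>" and \<psi>: "linear_z2 (Suc n) n \<psi>"
    and \<Lambda>: "\<And>w. w \<in> wed_verts V p \<Longrightarrow> \<Lambda> w \<in> vec (Suc n)"
    and apex: "\<psi> (\<Lambda> (Inr c)) = vzero" "\<Lambda> (Inr c) \<noteq> vzero"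
    and lift: "\<And>w. w \<in> wed_verts V p - {Inr c} \<Longrightarrow> lam (ident2 p w) = \<phi> (\<psi> (\<Lambda> w))"
  shows "lin_indep \<Lambda> \<sigma>"
proof -
  have \<sigma>_verts: "\<sigma> \<subseteq> wed_verts V p" using \<sigma>(1) by (rule wed_subset_verts)
  have "lin_indep lam (ident2 p ` (\<sigma> - {Inr c}))"
    using lam wed_face_image_ident2[OF V \<sigma>] unfolding char_map_def by blast
  moreover have "inj_on (ident2 p) (\<sigma> - {Inr c})"
    using inj_on_ident2[of p V c] by (rule inj_on_subset) (use \<sigma>_verts in blast)
  ultimately have "lin_indep (lam \<circ> ident2 p) (\<sigma> - {Inr c})"
    by (rule lin_indep_reindex)
  moreover have "(lam \<circ> ident2 p) w = (\<phi> \<circ> (\<psi> \<circ> \<Lambda>)) w" if "w \<in> \<sigma> - {Inr c}" for w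
    using lift[of w] that \<sigma>_verts by auto
  ultimately have "lin_indep (\<phi> \<circ> (\<psi> \<circ> \<Lambda>)) (\<sigma> - {Inr c})"
    by (rule lin_indep_cong)
  then have "lin_indep (\<psi> \<circ> \<Lambda>) (\<sigma> - {Inr c})"
  proof (rule lin_indep_if_comp_linear[OF \<phi>, rotated])
    fix w assume "w \<in> \<sigma> - {Inr c}"
    then show "(\<psi> \<circ> \<Lambda>) w \<in> vec n"
      using \<psi> \<Lambda>[of w] \<sigma>_verts unfolding linear_z2_def by auto
  qed
  moreover have "finite \<sigma>"
    using \<sigma>_verts V(1) by (simp add: wed_verts_def finite_subset)
  ultimately show ?thesis
    using \<Lambda> \<sigma>_verts apex by (intro lin_indep_kernel_extension[OF \<psi>, of \<sigma> \<Lambda> "Inr c"]) auto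
qed

lemma proj_DJ_vertex_eq_iff:
  assumes mnf: "\<forall>\<tau>\<in>min_nonfaces K V. 2 \<le> card \<tau>"
    and \<Lambda>: "char_map (wed K V p) (wed_verts V p) (Suc n) \<Lambda>"
    and proj: "proj_DJ (wed K V p) (Suc n) \<Lambda> {Inr c} (lam \<circ> ident2 p)"
    and v: "v \<in> V" "v \<noteq> p"
  shows "lam v = lam p \<longleftrightarrow> vadd (\<Lambda> (Inl v)) (\<Lambda> (Inr (\<not> c))) = \<Lambda> (Inr c)"
proof -
  obtain \<psi> \<phi> where \<psi>: "linear_z2 (Suc n) n \<psi>"
    and ker: "{x \<in> vec (Suc n). \<psi> x = vzero} = {vzero, \<Lambda> (Inr c)}"
    and \<phi>: "GL_z2 n \<phi>"
    and link: "\<And>w. w \<in> link_verts (wed K V p) {Inr c} \<Longrightarrow> lam (ident2 p w) = \<phi> (\<psi> (\<Lambda> w))"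
    using proj unfolding proj_DJ_def is_proj_def DJ_equiv_def by (auto simp: vspan_singleton)
  define x where "x = \<Lambda> (Inl v)"
  define y where "y = \<Lambda> (Inr (\<not> c))"
  have xy: "x \<in> vec (Suc n)" "y \<in> vec (Suc n)"
    using \<Lambda> v unfolding char_map_def x_def y_def by (simp_all add: Inl_in_wed_verts Inr_in_wed_verts)
  have "lin_indep \<Lambda> {Inl v, Inr (\<not> c)}"
    using \<Lambda> wed_edge_Inl_Inr[OF mnf v] by (simp add: char_map_def)
  then have "x \<noteq> y" by (auto simp: lin_indep_def x_def y_def)
  have "lam v = lam p \<longleftrightarrow> \<phi> (\<psi> x) = \<phi> (\<psi> y)"
    using link[OF link_verts_wed_Inl[OF mnf v]] link[OF link_verts_wed_Inr[OF mnf]]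
    by (simp add: x_def y_def)
  also have "\<dots> \<longleftrightarrow> \<psi> (vadd x y) = vzero"
    using \<psi> xy GL_z2_inj[OF \<phi>] by (simp add: linear_z2_def vadd_eq_vzero_iff)
  also have "\<dots> \<longleftrightarrow> vadd x y \<in> {vzero, \<Lambda> (Inr c)}"
    using ker xy vadd_in_vec by blast
  also have "\<dots> \<longleftrightarrow> vadd x y = \<Lambda> (Inr c)"
    using \<open>x \<noteq> y\<close> by (simp add: vadd_eq_vzero_iff)
  finally show ?thesis by (simp add: x_def y_def)
qed

lemma supp_eq_if_p_adjacent:
  assumes mnf: "\<forall>\<tau>\<in>min_nonfaces K V. 2 \<le> card \<tau>"
    and "p_adjacent K V n p lam1 lam2"
  shows "supp V lam1 p = supp V lam2 p"
proof -
  obtain \<Lambda> where \<Lambda>: "char_map (wed K V p) (wed_verts V p) (Suc n) \<Lambda>"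
    and proj1: "proj_DJ (wed K V p) (Suc n) \<Lambda> {p2} (lam1 \<circ> ident2 p)"
    and proj2: "proj_DJ (wed K V p) (Suc n) \<Lambda> {p1} (lam2 \<circ> ident2 p)"
    using assms(2) unfolding p_adjacent_def ident1_eq_ident2 by auto
  have "lam1 v = lam1 p \<longleftrightarrow> lam2 v = lam2 p" if "v \<in> V" "v \<noteq> p" for v
    using proj_DJ_vertex_eq_iff[OF mnf \<Lambda> proj1 that] proj_DJ_vertex_eq_iff[OF mnf \<Lambda> proj2 that]
    by (simp add: vadd_eq_swap)
  then show ?thesis by (auto simp: supp_def)
qed

lemma p_adjacent_if_twisted:
  assumes V: "finite V" "p \<in> V" and mnf: "\<forall>\<tau>\<in>min_nonfaces K V. 2 \<le> card \<tau>"
    and lam1: "char_map K V n lam1" and lam2: "char_map K V n lam2"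
    and \<phi>: "GL_z2 n \<phi>" "\<phi> (lam1 p) = lam2 p"
    and twist: "\<And>v. v \<in> V \<Longrightarrow> lam2 v = \<phi> (lam1 v) \<or> lam2 v = \<phi> (vadd (lam1 v) (lam1 p))"
  shows "p_adjacent K V n p lam1 lam2"
proof -
  define a where "a = lam1 p"
  define A where "A = a(n := True)"
  define e where "e = vzero(n := True)"
  define t where "t v = (lam2 v \<noteq> \<phi> (lam1 v))" for v
  define \<Lambda> where "\<Lambda> w = (case w of Inl v \<Rightarrow> (lam1 v)(n := t v) | Inr c \<Rightarrow> if c then e else A)" for w
  have \<Lambda>_simps: "\<Lambda> (Inl v) = (lam1 v)(n := t v)" "\<Lambda> p2 = e" "\<Lambda> p1 = A" for v
    by (simp_all add: \<Lambda>_def)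
  have lam1_vec: "lam1 v \<in> vec n" if "v \<in> V" for v
    using lam1 that by (simp add: char_map_def)
  then have a: "a \<in> vec n" using V(2) by (simp add: a_def)
  have A: "A \<in> vec (Suc n)" "A n" and e: "e \<in> vec (Suc n)" "e n"
    using a by (auto simp: A_def e_def vec_def vzero_def)
  have "\<Lambda> w \<in> vec (Suc n)" if "w \<in> wed_verts V p" for w
    using that A(1) e(1) lam1_vec by (auto simp: wed_verts_def \<Lambda>_simps vec_def)
  then have \<Lambda>_vec: "\<forall>w\<in>wed_verts V p. \<Lambda> w \<in> vec (Suc n)" by blast
  have proj_e: "proj_along n e (x(n := b)) = x" if "x \<in> vec n" for x b
    using proj_along_fun_upd[where A = e, OF that e(2)] vec_fun_upd_False[OF vzero_in_vec] by (simp add: e_def)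
  have proj_A: "proj_along n A (x(n := b)) = (if b then vadd x a else x)" if "x \<in> vec n" for x b
    using proj_along_fun_upd[where A = A, OF that A(2)] vec_fun_upd_False[OF a] by (simp add: A_def)
  have lift1: "lam1 (ident2 p w) = id (proj_along n e (\<Lambda> w))" if "w \<in> wed_verts V p - {p2}" for w
    using that a by (auto simp: wed_verts_def \<Lambda>_simps A_def a_def proj_e lam1_vec)
  have lift2: "lam2 (ident2 p w) = \<phi> (proj_along n A (\<Lambda> w))" if "w \<in> wed_verts V p - {p1}" for w
  proof -
    from that consider v where "w = Inl v" "v \<in> V" | "w = p2" by (auto simp: wed_verts_def)
    then show ?thesis
    proof cases
      case 1
      then show ?thesis using twist[of v] by (auto simp: \<Lambda>_simps proj_A lam1_vec t_def a_def)
    next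
      case 2
      then show ?thesis using \<phi>(2) proj_A[OF vzero_in_vec] by (simp add: \<Lambda>_simps e_def a_def)
    qed
  qed
  have apex: "A \<noteq> vzero" "e \<noteq> vzero"
    using A(2) e(2) vzero_apply by metis+
  have "lin_indep \<Lambda> \<sigma>" if \<sigma>: "\<sigma> \<in> wed K V p" for \<sigma>
  proof (cases "p1 \<in> \<sigma>")
    case True
    show ?thesis
      by (rule lin_indep_wed_face[OF V \<sigma> True lam2 GL_z2_linear[OF \<phi>(1)] linear_z2_proj_along[OF A]])
        (use \<Lambda>_vec apex lift2 proj_along_self[of A n] A(2) in \<open>auto simp: \<Lambda>_simps\<close>)
  next
    case False
    then have "insert p2 \<sigma> \<in> wed K V p" using wed_insert_Inr[OF \<sigma>, of True] by simp
    then have "lin_indep \<Lambda> (insert p2 \<sigma>)"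
      by (rule lin_indep_wed_face[OF V _ _ lam1 GL_z2_linear[OF GL_z2_id] linear_z2_proj_along[OF e]])
        (use \<Lambda>_vec apex lift1 proj_along_self[of e n] e(2) in \<open>auto simp: \<Lambda>_simps\<close>)
    then show ?thesis by (rule lin_indep_subset) blast
  qed
  then have "char_map (wed K V p) (wed_verts V p) (Suc n) \<Lambda>"
    using \<Lambda>_vec by (simp add: char_map_def)
  moreover have "proj_DJ (wed K V p) (Suc n) \<Lambda> {p2} (lam1 \<circ> ident2 p)"
    using lift1 link_verts_wed_subset[of K V p "{p2}"] e
    by (intro proj_DJ_proj_along[OF _ _ GL_z2_id]) (auto simp: \<Lambda>_simps)
  moreover have "proj_DJ (wed K V p) (Suc n) \<Lambda> {p1} (lam2 \<circ> ident2 p)"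
    using lift2 link_verts_wed_subset[of K V p "{p1}"] A
    by (intro proj_DJ_proj_along[OF _ _ \<phi>(1)]) (auto simp: \<Lambda>_simps)
  ultimately show ?thesis
    unfolding p_adjacent_def ident1_eq_ident2 by auto
qed

lemma twist_if_supp_eq_dim2:
  assumes lam1: "char_map K V 2 lam1" and lam2: "char_map K V 2 lam2"
    and vertices: "\<And>v. v \<in> V \<Longrightarrow> {v} \<in> K" and "p \<in> V"
    and supp: "supp V lam1 p = supp V lam2 p"
  obtains \<phi> where "GL_z2 2 \<phi>" "\<phi> (lam1 p) = lam2 p"
    "\<And>v. v \<in> V \<Longrightarrow> lam2 v = \<phi> (lam1 v) \<or> lam2 v = \<phi> (vadd (lam1 v) (lam1 p))"
proof -
  have lam1_v: "lam1 v \<in> vec 2" "lam1 v \<noteq> vzero" and lam2_v: "lam2 v \<in> vec 2" "lam2 v \<noteq> vzero"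
    if "v \<in> V" for v
    using char_map_vertex[OF lam1 that vertices[OF that]] char_map_vertex[OF lam2 that vertices[OF that]]
    by auto
  note p_v = lam1_v[OF \<open>p \<in> V\<close>] lam2_v[OF \<open>p \<in> V\<close>]
  obtain \<phi> where \<phi>: "GL_z2 2 \<phi>" "\<phi> (lam1 p) = lam2 p"
    using GL_z2_2_transitive[OF p_v(1) p_v(3) p_v(2) p_v(4)] by blast
  have \<phi>_vec: "\<phi> x \<in> vec 2" and \<phi>_vadd: "\<phi> (vadd x y) = vadd (\<phi> x) (\<phi> y)"
    if "x \<in> vec 2" "y \<in> vec 2" for x y
    using GL_z2_linear[OF \<phi>(1)] that by (simp_all add: linear_z2_def)
  have "lam2 v = \<phi> (lam1 v) \<or> lam2 v = \<phi> (vadd (lam1 v) (lam1 p))" if v: "v \<in> V" for v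
  proof (cases "lam1 v = lam1 p")
    case True
    then show ?thesis using supp v \<phi>(2) by (auto simp: supp_def)
  next
    case False
    then have "lam2 v \<noteq> lam2 p" using supp v by (auto simp: supp_def)
    moreover have "\<phi> (lam1 v) \<noteq> lam2 p"
      using GL_z2_inj[OF \<phi>(1) lam1_v(1)[OF v] p_v(1)] False \<phi>(2) by simp
    moreover have "\<phi> (lam1 v) \<noteq> vzero"
      using GL_z2_inj[OF \<phi>(1) lam1_v(1)[OF v] vzero_in_vec] lam1_v(2)[OF v]
        linear_z2_vzero[OF GL_z2_linear[OF \<phi>(1)]] by simp
    ultimately have "lam2 v = \<phi> (lam1 v) \<or> lam2 v = vadd (\<phi> (lam1 v)) (lam2 p)"
      using vec2_nonzero_cases[OF p_v(3) \<phi>_vec[OF lam1_v(1)[OF v] vzero_in_vec] lam2_v(1)[OF v] p_v(4)]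
        lam2_v(2)[OF v] by blast
    then show ?thesis using \<phi>_vadd[OF lam1_v(1)[OF v] p_v(1)] \<phi>(2) by simp
  qed
  then show ?thesis using \<phi> that by blast
qed

lemma polygon_min_nonfaces_card: "\<forall>\<tau>\<in>min_nonfaces (polygon m) {1..m}. 2 \<le> card \<tau>"
  by (auto simp: min_nonfaces_def polygon_def)

lemma polygon_vertex: "v \<in> {1..m} \<Longrightarrow> {v} \<in> polygon m"
  by (simp add: polygon_def)

theorem lemma3:
  fixes m p :: nat and lam1 lam2 :: "nat \<Rightarrow> z2vec"
  assumes "m \<ge> 3" and "p \<in> {1..m}"
    and "char_map (polygon m) {1..m} 2 lam1"
    and "char_map (polygon m) {1..m} 2 lam2"
  shows "p_adjacent (polygon m) {1..m} 2 p lam1 lam2 \<longleftrightarrow>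
         supp {1..m} lam1 p = supp {1..m} lam2 p"
proof
  assume "p_adjacent (polygon m) {1..m} 2 p lam1 lam2"
  then show "supp {1..m} lam1 p = supp {1..m} lam2 p"
    by (rule supp_eq_if_p_adjacent[OF polygon_min_nonfaces_card])
next
  assume "supp {1..m} lam1 p = supp {1..m} lam2 p"
  then obtain \<phi> where "GL_z2 2 \<phi>" "\<phi> (lam1 p) = lam2 p"
    "\<And>v. v \<in> {1..m} \<Longrightarrow> lam2 v = \<phi> (lam1 v) \<or> lam2 v = \<phi> (vadd (lam1 v) (lam1 p))"
    using twist_if_supp_eq_dim2[OF assms(3,4) polygon_vertex assms(2)] by blast
  then show "p_adjacent (polygon m) {1..m} 2 p lam1 lam2"
    using p_adjacent_if_twisted[OF finite_atLeastAtMost assms(2) polygon_min_nonfaces_card assms(3,4)]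
    by blast
qed

end
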